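(* Let $r>1$ and $0\le\theta\le\frac{\pi}{2}$. Then all four roots (counted with multiplicity) of the equation $$ re^{-i\theta}w^4-w^3+w-re^{i\theta}=0 $$ in the variable $w\in\mathbb{C}$ lie on the unit circle $\{w:|w|=1\}$. *)

theory Defs
  imports "HOL-Analysis.Analysis"
begin

end

theory Submission
  imports Defs
begin

(* With a = r e^(i\<theta>) the equation reads w^3 (conj(a) w - 1) = a - w, so |w|^3 is the
   quotient |w - a| / |conj(a) w - 1|. For |a| > 1 the identity
   |conj(a) w - 1|^2 - |w - a|^2 = (|a|^2 - 1)(|w|^2 - 1) puts this quotient strictly below 1
   when |w| > 1 and strictly above 1 when |w| < 1, the opposite side from |w|^3. *)

lemma norm_cnj_mult_sub_one_sq_diff:
  fixes a w :: complex
  shows "(cmod (cnj a * w - 1))\<^sup>2 - (cmod (w - a))\<^sup>2 = ((cmod a)\<^sup>2 - 1) * ((cmod w)\<^sup>2 - 1)"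
  unfolding cmod_power2 by (simp add: algebra_simps power2_eq_square)

lemma norm_sub_less_norm_cnj_mult_sub_one_iff:
  fixes a w :: complex
  assumes "1 < cmod a"
  shows "cmod (w - a) < cmod (cnj a * w - 1) \<longleftrightarrow> 1 < cmod w"
proof -
  have "cmod (w - a) < cmod (cnj a * w - 1) \<longleftrightarrow> (cmod (w - a))\<^sup>2 < (cmod (cnj a * w - 1))\<^sup>2"
    by (meson norm_ge_zero power_mono_iff zero_less_numeral not_le)
  also have "\<dots> \<longleftrightarrow> 0 < ((cmod a)\<^sup>2 - 1) * ((cmod w)\<^sup>2 - 1)"
    using norm_cnj_mult_sub_one_sq_diff[of a w] by linarith
  also have "\<dots> \<longleftrightarrow> 1 < (cmod w)\<^sup>2"
    using one_less_power[OF assms, of 2] by (auto simp: zero_less_mult_iff)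
  also have "\<dots> \<longleftrightarrow> 1 < cmod w"
    by (metis abs_norm_cancel abs_square_le_1 not_le)
  finally show ?thesis .
qed

lemma norm_cnj_mult_sub_one_less_norm_sub_iff:
  fixes a w :: complex
  assumes "1 < cmod a"
  shows "cmod (cnj a * w - 1) < cmod (w - a) \<longleftrightarrow> cmod w < 1"
proof -
  have "cmod (cnj a * w - 1) < cmod (w - a) \<longleftrightarrow> (cmod (cnj a * w - 1))\<^sup>2 < (cmod (w - a))\<^sup>2"
    by (meson norm_ge_zero power_mono_iff zero_less_numeral not_le)
  also have "\<dots> \<longleftrightarrow> ((cmod a)\<^sup>2 - 1) * ((cmod w)\<^sup>2 - 1) < 0"
    using norm_cnj_mult_sub_one_sq_diff[of a w] by linarith
  also have "\<dots> \<longleftrightarrow> (cmod w)\<^sup>2 < 1"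
    using one_less_power[OF assms, of 2] by (auto simp: mult_less_0_iff)
  also have "\<dots> \<longleftrightarrow> cmod w < 1"
    by (simp add: power_less_one_iff)
  finally show ?thesis .
qed

lemma norm_eq_one_if_root_of_self_inversive:
  fixes a w :: complex and n :: nat
  assumes a: "1 < cmod a" and root: "cnj a * w ^ Suc n - w ^ n + w - a = 0"
  shows "cmod w = 1"
proof -
  have "w ^ n * (cnj a * w - 1) = a - w"
    using root by (simp add: algebra_simps)
  then have norm_eq: "cmod w ^ n * cmod (cnj a * w - 1) = cmod (w - a)"
    by (metis norm_minus_commute norm_mult norm_power)
  show ?thesis
  proof (rule ccontr)
    assume "cmod w \<noteq> 1"
    then consider "1 < cmod w" | "cmod w < 1" by linarith
    then show False
    proof cases
      case 1
      then have "cmod (cnj a * w - 1) \<le> cmod w ^ n * cmod (cnj a * w - 1)"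
        by (simp add: mult_le_cancel_right1 one_le_power)
      then show False
        using norm_eq norm_sub_less_norm_cnj_mult_sub_one_iff[OF a, of w] 1 by linarith
    next
      case 2
      then have "cmod w ^ n * cmod (cnj a * w - 1) \<le> cmod (cnj a * w - 1)"
        by (simp add: mult_left_le_one_le power_le_one)
      then show False
        using norm_eq norm_cnj_mult_sub_one_less_norm_sub_iff[OF a, of w] 2 by linarith
    qed
  qed
qed

theorem theorem3p3:
  fixes r \<theta> :: real and w :: complex
  assumes "r > 1" and "0 \<le> \<theta>" and "\<theta> \<le> pi / 2"
    and "complex_of_real r * exp (- \<i> * complex_of_real \<theta>) * w ^ 4 - w ^ 3 + w
           - complex_of_real r * exp (\<i> * complex_of_real \<theta>) = 0"
  shows "norm w = 1"
proof -
  define a where "a = complex_of_real r * exp (\<i> * complex_of_real \<theta>)"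
  have "cnj a = complex_of_real r * exp (- \<i> * complex_of_real \<theta>)"
    by (simp add: a_def exp_cnj)
  moreover have "cmod a = r"
    using \<open>r > 1\<close> by (simp add: a_def norm_mult)
  ultimately show ?thesis
    using norm_eq_one_if_root_of_self_inversive[of a w 3] assms(1,4)
    by (simp add: a_def numeral_eq_Suc)
qed

end
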